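(* Let $I=(v,R,D)$ be an instance of the truck-drone problem, let $\mathcal{S}_g$ be the schedule produced by the greedy algorithm described in the context (for any tie-breaking), and let $\mathcal{S}_{OPT}$ be an optimal (maximum-length feasible) schedule for $I$. Then $\mathcal{S}_g$ is feasible and $|\mathcal{S}_{OPT}|\le 2|\mathcal{S}_g|$.
   Context: Truck-drone problem: a truck starts at $[0,0]$ at time $0$ and moves along the $x$-axis in the positive direction at speed $1$, so that at time $t$ it is at $[t,0]$. A drone with speed $v>1$ and flying range $R>0$ rides on it. An instance is $I=(v,R,D)$, with $D$ a finite multiset of points not on the positive $x$-axis. A delivery to $d$ starting at $[s,0]$ works as follows: the drone leaves at $[s,0]$, flies straight to $d$, then flies straight to meet the truck at $[r,0]$, where $r>s$ is the unique value with $|[s,0]d|+|d\,[r,0]|=v(r-s)$. The delivery is valid if $v(r-s)\le R$; we write $\mathrm{ret}(s,d)=r$. A schedule $((d_{i_1},s_1),\dots,(d_{i_m},s_m))$ (distinct indices, length $m$) is feasible if $s_1\ge0$, every delivery is valid, and the return point of delivery $j$ is $\le s_{j+1}$. Let $M=R/2$ and $m_0=\frac{R}{2v}\sqrt{v^2-1}$. For $d=[x,y]$ with $|y|\le m_0$, let $x'=M\sqrt{1-y^2/m_0^2}$, $es(d)=x-\frac{R}{2v}-x'$ and $ls(d)=x-\frac{R}{2v}+x'$; then $d$ is reachable by a valid delivery from $[s,0]$ exactly when $es(d)\le s\le ls(d)$. Greedy algorithm: set $s\gets0$ and let $U$ be the set of points of $D$ with $|y|\le m_0$. Repeat the following step.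 Let $F=\{d\in U: es(d)\le s\le ls(d)\}$. If $F\ne\emptyset$, choose $d\in F$ minimizing $\mathrm{ret}(s,d)$, append $(d,s)$ to the schedule, remove $d$ from $U$, and set $s\gets\mathrm{ret}(s,d)$. Otherwise, if some $d\in U$ has $es(d)>s$, set $s\gets\min\{es(d): d\in U, es(d)>s\}$. Otherwise stop. *)

theory Defs
  imports Complex_Main
begin

text \<open>Points are pairs (x,y) of reals; the truck at time t is at (t,0).
  The multiset D of delivery points is represented as a list; deliveries refer
  to indices into this list (so repeated points are distinct deliveries).\<close>

definition edist :: "real \<times> real \<Rightarrow> real \<times> real \<Rightarrow> real" where
  "edist p q = sqrt ((fst p - fst q)^2 + (snd p - snd q)^2)"

definition ret :: "real \<Rightarrow> real \<Rightarrow> real \<times> real \<Rightarrow> real" where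
  "ret v s d = (THE r. r > s \<and> edist (s,0) d + edist d (r,0) = v * (r - s))"

definition valid_delivery :: "real \<Rightarrow> real \<Rightarrow> real \<Rightarrow> real \<times> real \<Rightarrow> bool" where
  "valid_delivery v R s d \<longleftrightarrow> v * (ret v s d - s) \<le> R"

text \<open>A schedule is a list of (index into D, start point) pairs.\<close>
definition feasible :: "real \<Rightarrow> real \<Rightarrow> (real \<times> real) list \<Rightarrow> (nat \<times> real) list \<Rightarrow> bool" where
  "feasible v R D S \<longleftrightarrow>
     distinct (map fst S) \<and>
     (\<forall>(i,s)\<in>set S. i < length D \<and> valid_delivery v R s (D ! i)) \<and>
     (S \<noteq> [] \<longrightarrow> snd (hd S) \<ge> 0) \<and>
     (\<forall>j. Suc j < length S \<longrightarrow> ret v (snd (S ! j)) (D ! fst (S ! j)) \<le> snd (S ! Suc j))"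

definition Mh :: "real \<Rightarrow> real" where "Mh R = R / 2"
definition m0 :: "real \<Rightarrow> real \<Rightarrow> real" where "m0 v R = R / (2 * v) * sqrt (v^2 - 1)"
definition xprime :: "real \<Rightarrow> real \<Rightarrow> real \<times> real \<Rightarrow> real" where
  "xprime v R d = Mh R * sqrt (1 - (snd d)^2 / (m0 v R)^2)"
definition es :: "real \<Rightarrow> real \<Rightarrow> real \<times> real \<Rightarrow> real" where
  "es v R d = fst d - R / (2 * v) - xprime v R d"
definition ls :: "real \<Rightarrow> real \<Rightarrow> real \<times> real \<Rightarrow> real" where
  "ls v R d = fst d - R / (2 * v) + xprime v R d"

definition Fset :: "real \<Rightarrow> real \<Rightarrow> (real \<times> real) list \<Rightarrow> real \<Rightarrow> nat set \<Rightarrow> nat set" where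
  "Fset v R D s U = {i \<in> U. es v R (D ! i) \<le> s \<and> s \<le> ls v R (D ! i)}"

text \<open>Greedy algorithm as a relation: greedy_run v R D s U S means that, started in
  state (s,U), some run of the algorithm (with some tie-breaking) stops and
  appends exactly the schedule S.\<close>
inductive greedy_run :: "real \<Rightarrow> real \<Rightarrow> (real \<times> real) list \<Rightarrow> real \<Rightarrow> nat set \<Rightarrow> (nat \<times> real) list \<Rightarrow> bool"
  for v R D where
  pick: "\<lbrakk> i \<in> Fset v R D s U;
          \<forall>j \<in> Fset v R D s U. ret v s (D ! i) \<le> ret v s (D ! j);
          greedy_run v R D (ret v s (D ! i)) (U - {i}) S \<rbrakk>
         \<Longrightarrow> greedy_run v R D s U ((i, s) # S)"
| jump: "\<lbrakk> Fset v R D s U = {};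
          \<exists>i \<in> U. es v R (D ! i) > s;
          greedy_run v R D (Min {es v R (D ! i) | i. i \<in> U \<and> es v R (D ! i) > s}) U S \<rbrakk>
         \<Longrightarrow> greedy_run v R D s U S"
| stop: "\<lbrakk> Fset v R D s U = {}; \<forall>i \<in> U. \<not> es v R (D ! i) > s \<rbrakk>
         \<Longrightarrow> greedy_run v R D s U []"

definition greedy_init :: "real \<Rightarrow> real \<Rightarrow> (real \<times> real) list \<Rightarrow> nat set" where
  "greedy_init v R D = {i. i < length D \<and> \<bar>snd (D ! i)\<bar> \<le> m0 v R}"

definition greedy_schedule :: "real \<Rightarrow> real \<Rightarrow> (real \<times> real) list \<Rightarrow> (nat \<times> real) list \<Rightarrow> bool" where
  "greedy_schedule v R D S \<longleftrightarrow> greedy_run v R D 0 (greedy_init v R D) S"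

end

theory Submission
  imports Defs "HOL-Analysis.Product_Vector"
begin

text \<open>A delivery launched at \<open>s\<close> is valid iff the point lies in the ellipse with foci \<open>(s,0)\<close> and
  \<open>(s + R/v, 0)\<close> and major axis \<open>R\<close>; this is what makes \<open>[es d, ls d]\<close> the window of launch points.
  Trips of an optimal schedule to points that the greedy schedule serves number at most \<open>|S\<^sub>g|\<close>,
  since each point is served once. Every other trip, launched at \<open>t\<close>, is charged to the first
  greedy delivery whose return point \<open>b\<close> exceeds \<open>t\<close>: by the greedy choice that trip is still in
  the air at \<open>b\<close>, and disjoint trips cannot both be, so each greedy delivery is charged at most once.\<close>

lemma edist_eq_dist: "edist p q = dist p q"
  by (cases p; cases q) (simp add: edist_def dist_Pair_Pair dist_real_def power2_abs)

lemma dist_on_axis: "dist ((r::real), (0::real)) (r', 0) = \<bar>r - r'\<bar>"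
  by (simp add: dist_Pair_Pair dist_real_def)

definition ret_gap :: "real \<Rightarrow> real \<Rightarrow> real \<times> real \<Rightarrow> real \<Rightarrow> real" where
  "ret_gap v s d r = dist (s,0) d + dist d (r,0) - v * (r - s)"

lemma ret_gap_strict_antimono:
  assumes "v > 1" "r < r'"
  shows "ret_gap v s d r' < ret_gap v s d r"
proof -
  have "dist d (r',0) \<le> dist d (r,0) + dist (r,0) (r',0::real)"
    by (rule dist_triangle)
  also have "dist (r,0) (r',0::real) = r' - r"
    using assms by (simp add: dist_on_axis)
  finally have "dist d (r',0) \<le> dist d (r,0) + (r' - r)" .
  moreover have "(r' - r) * 1 < (r' - r) * v"
    using assms by (intro mult_strict_left_mono) auto
  ultimately show ?thesis
    unfolding ret_gap_def by (simp add: algebra_simps)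
qed

lemma ret_gap_antimono:
  assumes "v > 1" "r \<le> r'"
  shows "ret_gap v s d r' \<le> ret_gap v s d r"
  using ret_gap_strict_antimono[OF assms(1)] assms(2) by (metis order_le_less order_refl)

text \<open>The gap is \<open>2 dist (s,0) d > 0\<close> at \<open>r = s\<close> and decreases with slope at most \<open>1 - v < 0\<close>,
  so it has exactly one root to the right of \<open>s\<close>, and that root is \<open>ret\<close>.\<close>
lemma ret_spec:
  assumes "v > 1" "d \<noteq> (s,0)"
  shows "s < ret v s d" "ret_gap v s d (ret v s d) = 0"
proof -
  let ?e = "dist (s,0) d"
  have e: "?e > 0" using assms by simp
  define b where "b = s + 2 * ?e / (v - 1)"
  have sb: "s < b" using e assms by (simp add: b_def)
  have gap_s: "ret_gap v s d s = 2 * ?e"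
    unfolding ret_gap_def by (simp add: dist_commute)
  have "dist d (b,0) \<le> dist d (s,0) + dist (s,0) (b,0::real)"
    by (rule dist_triangle)
  hence "ret_gap v s d b \<le> 2 * ?e + (b - s) - v * (b - s)"
    unfolding ret_gap_def using sb by (simp add: dist_on_axis dist_commute)
  also have "\<dots> = 0" using assms by (simp add: b_def field_simps)
  finally have "ret_gap v s d b \<le> 0" .
  moreover have "continuous_on {s..b} (ret_gap v s d)"
    unfolding ret_gap_def by (intro continuous_intros)
  ultimately obtain r where r: "s \<le> r" "r \<le> b" "ret_gap v s d r = 0"
    using IVT2'[of "ret_gap v s d" b 0 s] gap_s e sb by auto
  have "s < r" using r gap_s e by (cases "r = s") auto
  have "ret v s d = r"
    unfolding ret_def
  proof (rule the_equality)
    show "s < r \<and> edist (s,0) d + edist d (r,0) = v * (r - s)"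
      using \<open>s < r\<close> r(3) by (simp add: edist_eq_dist ret_gap_def)
  next
    fix r' assume "s < r' \<and> edist (s,0) d + edist d (r',0) = v * (r' - s)"
    hence "ret_gap v s d r' = 0" by (simp add: edist_eq_dist ret_gap_def)
    thus "r' = r"
      using ret_gap_strict_antimono[OF assms(1), of r r' s d]
        ret_gap_strict_antimono[OF assms(1), of r' r s d] r(3)
      by (cases r r' rule: linorder_cases) auto
  qed
  thus "s < ret v s d" "ret_gap v s d (ret v s d) = 0" using \<open>s < r\<close> r(3) by simp_all
qed

lemma ret_le_iff_gap_nonpos:
  assumes "v > 1" "d \<noteq> (s,0)"
  shows "ret v s d \<le> b \<longleftrightarrow> ret_gap v s d b \<le> 0"
  using ret_gap_antimono[OF assms(1), of "ret v s d" b s d]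
    ret_gap_strict_antimono[OF assms(1), of b "ret v s d" s d] ret_spec[OF assms]
  by (cases "ret v s d \<le> b") auto

lemma ret_mono:
  assumes "v > 1" "d \<noteq> (s,0)" "d \<noteq> (s',0)" "s \<le> s'"
  shows "ret v s d \<le> ret v s' d"
proof (cases "ret v s d \<le> s'")
  case True
  thus ?thesis using ret_spec(1)[OF assms(1,3)] by simp
next
  case False
  let ?r = "ret v s d"
  have "dist (s,0) d \<le> dist (s,0) (s',0::real) + dist (s',0) d"
    by (rule dist_triangle)
  hence "dist (s,0) d \<le> (s' - s) + dist (s',0) d"
    using assms by (simp add: dist_on_axis)
  moreover have "(s' - s) * 1 \<le> (s' - s) * v"
    using assms by (intro mult_left_mono) auto
  ultimately have "ret_gap v s d ?r \<le> ret_gap v s' d ?r"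
    unfolding ret_gap_def by (simp add: algebra_simps)
  hence "0 \<le> ret_gap v s' d ?r" using ret_spec(2)[OF assms(1,2)] by simp
  thus ?thesis
    using ret_spec(2)[OF assms(1,3)] ret_gap_strict_antimono[OF assms(1), of "ret v s' d" ?r s' d]
    by (cases "ret v s' d < ?r") auto
qed

text \<open>The second focus \<open>(s + R/v, 0)\<close> is the farthest point at which the drone can meet the truck.\<close>
definition in_ellipse :: "real \<Rightarrow> real \<Rightarrow> real \<Rightarrow> real \<times> real \<Rightarrow> bool" where
  "in_ellipse v R s d \<longleftrightarrow> dist (s,0) d + dist d (s + R / v, 0) \<le> R"

lemma valid_delivery_iff_in_ellipse:
  assumes "v > 1" "R > 0" "d \<noteq> (s,0)"
  shows "valid_delivery v R s d \<longleftrightarrow> in_ellipse v R s d"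
proof -
  have "valid_delivery v R s d \<longleftrightarrow> ret v s d \<le> s + R / v"
    unfolding valid_delivery_def using assms by (simp add: field_simps)
  also have "\<dots> \<longleftrightarrow> ret_gap v s d (s + R / v) \<le> 0"
    by (rule ret_le_iff_gap_nonpos[OF assms(1,3)])
  also have "\<dots> \<longleftrightarrow> in_ellipse v R s d"
    unfolding ret_gap_def in_ellipse_def using assms by simp
  finally show ?thesis .
qed

text \<open>If \<open>d\<close> cannot be served from an earlier point \<open>a\<close>, any valid delivery to it from \<open>s \<ge> a\<close>
  returns beyond the farthest meeting point \<open>a + R/v\<close> of a delivery launched at \<open>a\<close>:
  otherwise the detour through \<open>(s,0)\<close> and \<open>(ret v s d, 0)\<close> would put \<open>d\<close> in the ellipse of \<open>a\<close>.\<close>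
lemma ret_gt_if_not_in_ellipse:
  assumes "v > 1" "R > 0" "d \<noteq> (s,0)" "a \<le> s" "\<not> in_ellipse v R a d" "valid_delivery v R s d"
  shows "a + R / v < ret v s d"
proof (rule ccontr)
  let ?r = "ret v s d" and ?L = "R / v"
  assume "\<not> a + ?L < ?r"
  have r: "s < ?r" "dist (s,0) d + dist d (?r,0) = v * (?r - s)"
    using ret_spec[OF assms(1,3)] unfolding ret_gap_def by auto
  have "dist (a,0) d \<le> dist (a,0) (s,0::real) + dist (s,0) d"
    by (rule dist_triangle)
  moreover have "dist d (a + ?L,0) \<le> dist d (?r,0) + dist (?r,0) (a + ?L,0::real)"
    by (rule dist_triangle)
  ultimately have "R < (s - a) + v * (?r - s) + (a + ?L - ?r)"
    using assms(4,5) \<open>\<not> a + ?L < ?r\<close> r unfolding in_ellipse_def by (simp add: dist_on_axis)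
  also have "\<dots> = (?r - s) * (v - 1) + ?L" by (simp add: algebra_simps)
  also have "\<dots> \<le> ?L * (v - 1) + ?L"
  proof -
    have "?r - s \<le> ?L"
      using assms(1,6) unfolding valid_delivery_def by (simp add: pos_le_divide_eq mult.commute)
    thus ?thesis using assms(1) by (intro add_right_mono mult_right_mono) auto
  qed
  also have "\<dots> = R" using assms(1) by (simp add: field_simps)
  finally show False by simp
qed

lemma focal_sum_le_iff:
  fixes u y c M b :: real
  assumes "0 < c" "c < M" "b > 0" "b^2 = M^2 - c^2"
  shows "sqrt ((u + c)^2 + y^2) + sqrt ((u - c)^2 + y^2) \<le> 2 * M \<longleftrightarrow>
         b^2 * u^2 + M^2 * y^2 \<le> M^2 * b^2"
proof -
  define A where "A = (u + c)^2 + y^2"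
  define B where "B = (u - c)^2 + y^2"
  define W where "W = u^2 + c^2 + y^2"
  have A0: "A \<ge> 0" and B0: "B \<ge> 0" by (simp_all add: A_def B_def)
  have AB: "A + B = 2 * W" by (simp add: A_def B_def W_def power2_eq_square algebra_simps)
  have sq: "(sqrt A + sqrt B)^2 = A + B + 2 * sqrt (A * B)"
    using A0 B0 by (simp add: power2_eq_square algebra_simps real_sqrt_mult)
  have "(4 * M^2 - 2 * W)^2 - 4 * (A * B) = 16 * (M^2 * b^2 - (b^2 * u^2 + M^2 * y^2))"
    unfolding A_def B_def W_def using assms(4) by algebra
  moreover have "\<And>X Y p q :: real. X - Y = 16 * (p - q) \<Longrightarrow> Y \<le> X \<longleftrightarrow> q \<le> p" by auto
  ultimately have key: "4 * (A * B) \<le> (4 * M^2 - 2 * W)^2 \<longleftrightarrow> b^2 * u^2 + M^2 * y^2 \<le> M^2 * b^2"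
    by blast
  have M0: "M > 0" using assms by simp
  show ?thesis
  proof
    assume "sqrt ((u + c)^2 + y^2) + sqrt ((u - c)^2 + y^2) \<le> 2 * M"
    hence "(sqrt A + sqrt B)^2 \<le> (2 * M)^2"
      unfolding A_def B_def by (intro power_mono) auto
    hence "2 * sqrt (A * B) \<le> 4 * M^2 - 2 * W" using sq AB by (simp add: power2_eq_square)
    hence "(2 * sqrt (A * B))^2 \<le> (4 * M^2 - 2 * W)^2"
      using A0 B0 by (intro power_mono) auto
    moreover have "(2 * sqrt (A * B))^2 = 4 * (A * B)" using A0 B0 by (simp add: power_mult_distrib)
    ultimately show "b^2 * u^2 + M^2 * y^2 \<le> M^2 * b^2" using key by simp
  next
    assume h: "b^2 * u^2 + M^2 * y^2 \<le> M^2 * b^2"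
    have nn: "0 \<le> b^2 * u^2" "0 \<le> M^2 * y^2" by simp_all
    have "M^2 * y^2 \<le> M^2 * b^2" using h nn by linarith
    hence y2: "y^2 \<le> b^2" using M0 by simp
    have "b^2 * u^2 \<le> M^2 * b^2" using h nn by linarith
    hence "u^2 * b^2 \<le> M^2 * b^2" by (simp add: mult.commute)
    hence u2: "u^2 \<le> M^2" using assms(3) by simp
    have W2: "2 * W \<le> 4 * M^2" unfolding W_def using y2 u2 assms(4) by simp
    have "sqrt (4 * (A * B)) \<le> sqrt ((4 * M^2 - 2 * W)^2)"
      using key h by (intro real_sqrt_le_mono) simp
    hence "2 * sqrt (A * B) \<le> 4 * M^2 - 2 * W" using W2 by (simp add: real_sqrt_mult)
    hence "(sqrt A + sqrt B)^2 \<le> (2 * M)^2" using sq AB by (simp add: power_mult_distrib)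
    hence "sqrt A + sqrt B \<le> 2 * M" using power2_le_imp_le[of "sqrt A + sqrt B" "2 * M"] M0 by linarith
    thus "sqrt ((u + c)^2 + y^2) + sqrt ((u - c)^2 + y^2) \<le> 2 * M" by (simp add: A_def B_def)
  qed
qed

lemma ellipse_ineq_iff:
  fixes u y M b :: real
  assumes "b > 0" "M > 0"
  shows "b^2 * u^2 + M^2 * y^2 \<le> M^2 * b^2 \<longleftrightarrow> \<bar>y\<bar> \<le> b \<and> \<bar>u\<bar> \<le> M * sqrt (1 - y^2 / b^2)"
proof -
  have b2: "b^2 > 0" using assms by simp
  have "M^2 * (1 - y^2 / b^2) = (M^2 * b^2 - M^2 * y^2) / b^2" using b2 by (simp add: field_simps)
  hence "u^2 \<le> M^2 * (1 - y^2 / b^2) \<longleftrightarrow> u^2 * b^2 \<le> M^2 * b^2 - M^2 * y^2"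
    using b2 by (simp add: pos_le_divide_eq)
  hence eq: "b^2 * u^2 + M^2 * y^2 \<le> M^2 * b^2 \<longleftrightarrow> u^2 \<le> M^2 * (1 - y^2 / b^2)"
    by (simp add: algebra_simps)
  show ?thesis
  proof
    assume h: "b^2 * u^2 + M^2 * y^2 \<le> M^2 * b^2"
    have "0 \<le> b^2 * u^2" by simp
    hence "M^2 * y^2 \<le> M^2 * b^2" using h by linarith
    hence "\<bar>y\<bar> \<le> b" using assms abs_le_square_iff[of y b] by simp
    moreover have "sqrt (u^2) \<le> sqrt (M^2 * (1 - y^2 / b^2))"
      using eq h by (intro real_sqrt_le_mono) simp
    ultimately show "\<bar>y\<bar> \<le> b \<and> \<bar>u\<bar> \<le> M * sqrt (1 - y^2 / b^2)"
      using assms by (simp add: real_sqrt_mult)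
  next
    assume h: "\<bar>y\<bar> \<le> b \<and> \<bar>u\<bar> \<le> M * sqrt (1 - y^2 / b^2)"
    have "0 \<le> 1 - y^2 / b^2" using h b2 assms abs_le_square_iff[of y b] by simp
    moreover have "\<bar>u\<bar>^2 \<le> (M * sqrt (1 - y^2 / b^2))^2" using h by (intro power_mono) auto
    ultimately show "b^2 * u^2 + M^2 * y^2 \<le> M^2 * b^2" using eq by (simp add: power_mult_distrib)
  qed
qed

lemma in_ellipse_iff_es_ls:
  assumes "v > 1" "R > 0"
  shows "in_ellipse v R s d \<longleftrightarrow> \<bar>snd d\<bar> \<le> m0 v R \<and> es v R d \<le> s \<and> s \<le> ls v R d"
proof -
  obtain x y where d: "d = (x,y)" by (cases d)
  define c where "c = R / (2 * v)"
  define M where "M = R / 2"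
  define b where "b = m0 v R"
  define u where "u = x - s - c"
  have v0: "v > 0" using assms by simp
  have c0: "c > 0" using assms by (simp add: c_def)
  have cM: "c < M" using assms unfolding c_def M_def by (simp add: field_simps)
  have sq: "sqrt (v^2 - 1) > 0" using assms by (simp add: power_less_one_iff)
  have b0: "b > 0" unfolding b_def m0_def using sq assms by simp
  have "b^2 = (R / (2 * v))^2 * (sqrt (v^2 - 1))^2"
    unfolding b_def m0_def by (simp add: power_mult_distrib power_divide)
  also have "(sqrt (v^2 - 1))^2 = v^2 - 1" using sq by simp
  finally have b2: "b^2 = M^2 - c^2"
    unfolding M_def c_def using v0 by (simp add: field_simps power2_eq_square)
  have "dist (s,0) d = sqrt ((u + c)^2 + y^2)"
    unfolding d u_def by (simp add: dist_Pair_Pair dist_real_def power2_commute)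
  moreover have "x - (s + R / v) = u - c"
    unfolding u_def c_def using v0 by (simp add: field_simps)
  hence "dist d (s + R / v, 0) = sqrt ((u - c)^2 + y^2)"
    unfolding d by (simp add: dist_Pair_Pair dist_real_def)
  ultimately have "in_ellipse v R s d \<longleftrightarrow> sqrt ((u + c)^2 + y^2) + sqrt ((u - c)^2 + y^2) \<le> 2 * M"
    unfolding in_ellipse_def M_def by simp
  also have "\<dots> \<longleftrightarrow> b^2 * u^2 + M^2 * y^2 \<le> M^2 * b^2"
    by (rule focal_sum_le_iff[OF c0 cM b0 b2])
  also have "\<dots> \<longleftrightarrow> \<bar>y\<bar> \<le> b \<and> \<bar>u\<bar> \<le> M * sqrt (1 - y^2 / b^2)"
    using cM c0 by (intro ellipse_ineq_iff[OF b0]) simp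
  also have "\<dots> \<longleftrightarrow> \<bar>snd d\<bar> \<le> m0 v R \<and> es v R d \<le> s \<and> s \<le> ls v R d"
  proof -
    define xp where "xp = M * sqrt (1 - y^2 / b^2)"
    have "es v R d = x - c - xp" "ls v R d = x - c + xp"
      unfolding es_def ls_def xprime_def xp_def d M_def Mh_def b_def c_def by simp_all
    hence "\<bar>u\<bar> \<le> xp \<longleftrightarrow> es v R d \<le> s \<and> s \<le> ls v R d"
      unfolding u_def abs_le_iff by linarith
    thus ?thesis unfolding xp_def d b_def by simp
  qed
  finally show ?thesis .
qed

locale truck_drone =
  fixes v R :: real and D :: "(real \<times> real) list"
  assumes speed_gt_1: "v > 1" and range_pos: "R > 0"
    and off_positive_axis: "\<forall>d \<in> set D. \<not> (snd d = 0 \<and> fst d \<ge> 0)"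
begin

lemma nth_D_ne_axis_point: "0 \<le> s \<Longrightarrow> i < length D \<Longrightarrow> D ! i \<noteq> (s,0)"
  using off_positive_axis nth_mem by fastforce

lemma valid_delivery_iff:
  assumes "0 \<le> s" "i < length D"
  shows "valid_delivery v R s (D ! i) \<longleftrightarrow>
         \<bar>snd (D ! i)\<bar> \<le> m0 v R \<and> es v R (D ! i) \<le> s \<and> s \<le> ls v R (D ! i)"
  using valid_delivery_iff_in_ellipse[OF speed_gt_1 range_pos nth_D_ne_axis_point[OF assms]]
    in_ellipse_iff_es_ls[OF speed_gt_1 range_pos] by simp

definition finish :: "nat \<times> real \<Rightarrow> real" where
  "finish x = ret v (snd x) (D ! fst x)"

definition valid_trip :: "nat \<times> real \<Rightarrow> bool" where
  "valid_trip x \<longleftrightarrow> fst x < length D \<and> valid_delivery v R (snd x) (D ! fst x)"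

lemma finish_Pair [simp]: "finish (i, s) = ret v s (D ! i)"
  by (simp add: finish_def)

lemma start_less_finish: "0 \<le> snd x \<Longrightarrow> fst x < length D \<Longrightarrow> snd x < finish x"
  unfolding finish_def using ret_spec(1)[OF speed_gt_1 nth_D_ne_axis_point] by simp

lemma finish_le_range: "valid_trip x \<Longrightarrow> finish x \<le> snd x + R / v"
  using speed_gt_1 unfolding valid_trip_def valid_delivery_def finish_def
  by (auto simp: field_simps)

lemma valid_trip_es_ls:
  assumes "valid_trip x" "0 \<le> snd x"
  shows "es v R (D ! fst x) \<le> snd x" "snd x \<le> ls v R (D ! fst x)"
  using assms valid_delivery_iff[of "snd x" "fst x"] by (simp_all add: valid_trip_def)

lemma feasible_iff:
  "feasible v R D S \<longleftrightarrow>
     distinct (map fst S) \<and> (\<forall>x \<in> set S. valid_trip x) \<and> (S \<noteq> [] \<longrightarrow> 0 \<le> snd (hd S)) \<and>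
     (\<forall>j. Suc j < length S \<longrightarrow> finish (S ! j) \<le> snd (S ! Suc j))"
  unfolding feasible_def finish_def valid_trip_def by auto

lemma feasible_start_nonneg:
  assumes "feasible v R D S" "k < length S"
  shows "0 \<le> snd (S ! k)"
  using assms(2)
proof (induction k)
  case 0
  thus ?case using assms(1) by (simp add: feasible_iff hd_conv_nth)
next
  case (Suc k)
  have "valid_trip (S ! k)" using assms(1) Suc.prems by (simp add: feasible_iff)
  hence "snd (S ! k) < finish (S ! k)"
    using Suc by (intro start_less_finish) (auto simp: valid_trip_def)
  also have "\<dots> \<le> snd (S ! Suc k)" using assms(1) Suc.prems by (simp add: feasible_iff)
  finally show ?case using Suc by simp
qed

lemma feasible_finish_le_start:
  assumes "feasible v R D S" "j < k" "k < length S"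
  shows "finish (S ! j) \<le> snd (S ! k)"
  using assms(2,3)
proof (induction k)
  case 0
  thus ?case by simp
next
  case (Suc k)
  show ?case
  proof (cases "j = k")
    case True
    thus ?thesis using assms(1) Suc.prems by (simp add: feasible_iff)
  next
    case False
    have "valid_trip (S ! k)" using assms(1) Suc.prems by (simp add: feasible_iff)
    have "finish (S ! j) \<le> snd (S ! k)" using Suc False by simp
    also have "snd (S ! k) < finish (S ! k)"
      using \<open>valid_trip (S ! k)\<close> feasible_start_nonneg[OF assms(1)] Suc.prems
      by (intro start_less_finish) (auto simp: valid_trip_def)
    also have "\<dots> \<le> snd (S ! Suc k)" using assms(1) Suc.prems by (simp add: feasible_iff)
    finally show ?thesis by simp
  qed
qed

definition disjoint_trips :: "(nat \<times> real) set \<Rightarrow> bool" where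
  "disjoint_trips P \<longleftrightarrow> (\<forall>x \<in> P. \<forall>y \<in> P. x \<noteq> y \<longrightarrow> finish x \<le> snd y \<or> finish y \<le> snd x)"

lemma feasible_disjoint_trips:
  assumes "feasible v R D S"
  shows "disjoint_trips (set S)"
  unfolding disjoint_trips_def
proof (intro ballI impI)
  fix x y assume "x \<in> set S" "y \<in> set S" "x \<noteq> y"
  then obtain j k where jk: "j < length S" "k < length S" "S ! j = x" "S ! k = y" "j \<noteq> k"
    by (metis in_set_conv_nth)
  show "finish x \<le> snd y \<or> finish y \<le> snd x"
  proof (cases "j < k")
    case True
    thus ?thesis using feasible_finish_le_start[OF assms True jk(2)] jk by simp
  next
    case False
    hence "k < j" using jk(5) by simp
    thus ?thesis using feasible_finish_le_start[OF assms \<open>k < j\<close> jk(1)] jk by simp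
  qed
qed

lemma card_trips_across_le_1:
  assumes "finite P" "disjoint_trips P"
  shows "card {x \<in> P. snd x < b \<and> b \<le> finish x} \<le> 1"
proof -
  let ?A = "{x \<in> P. snd x < b \<and> b \<le> finish x}"
  have "x = y" if "x \<in> ?A" "y \<in> ?A" for x y
  proof (rule ccontr)
    assume "x \<noteq> y"
    hence "finish x \<le> snd y \<or> finish y \<le> snd x"
      using assms(2) that unfolding disjoint_trips_def by blast
    thus False using that by auto
  qed
  moreover have "finite ?A" using assms(1) by simp
  ultimately show ?thesis using card_le_Suc0_iff_eq[of ?A] by (simp add: One_nat_def)
qed

definition pending :: "real \<Rightarrow> nat set \<Rightarrow> nat set" where
  "pending s U = {i \<in> U. s < es v R (D ! i)}"

lemma jump_target_eq:
  "{es v R (D ! i) | i. i \<in> U \<and> es v R (D ! i) > s} = (\<lambda>i. es v R (D ! i)) ` pending s U"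
  unfolding pending_def by auto

lemma finite_greedy_init: "finite (greedy_init v R D)"
  unfolding greedy_init_def by simp

lemma valid_trip_if_Fset:
  assumes "i \<in> Fset v R D s U" "U \<subseteq> greedy_init v R D" "0 \<le> s"
  shows "valid_trip (i, s)"
  using assms valid_delivery_iff[OF assms(3)]
  unfolding valid_trip_def Fset_def greedy_init_def by auto

lemma finite_pending: "U \<subseteq> greedy_init v R D \<Longrightarrow> finite (pending s U)"
  using finite_greedy_init finite_subset unfolding pending_def by fastforce

lemma jump_target_le:
  assumes "U \<subseteq> greedy_init v R D" "i \<in> pending s U"
  shows "Min {es v R (D ! i) | i. i \<in> U \<and> es v R (D ! i) > s} \<le> es v R (D ! i)"
  unfolding jump_target_eq using finite_pending[OF assms(1)] assms(2) by simp

lemma jump_target_gt: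
  assumes "U \<subseteq> greedy_init v R D" "\<exists>i \<in> U. es v R (D ! i) > s"
  shows "s < Min {es v R (D ! i) | i. i \<in> U \<and> es v R (D ! i) > s}"
proof -
  have "pending s U \<noteq> {}" using assms(2) unfolding pending_def by auto
  thus ?thesis using finite_pending[OF assms(1)] unfolding jump_target_eq pending_def by simp
qed

lemma pending_jump_target_psubset:
  assumes "U \<subseteq> greedy_init v R D" "\<exists>i \<in> U. es v R (D ! i) > s"
  shows "pending (Min {es v R (D ! i) | i. i \<in> U \<and> es v R (D ! i) > s}) U \<subset> pending s U"
proof -
  let ?s' = "Min {es v R (D ! i) | i. i \<in> U \<and> es v R (D ! i) > s}"
  have "pending s U \<noteq> {}" using assms(2) unfolding pending_def by auto
  hence "?s' \<in> (\<lambda>i. es v R (D ! i)) ` pending s U"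
    unfolding jump_target_eq using finite_pending[OF assms(1)] by (intro Min_in) auto
  then obtain i0 where "i0 \<in> pending s U" "?s' = es v R (D ! i0)" by blast
  thus ?thesis using jump_target_gt[OF assms] unfolding pending_def by auto
qed

text \<open>The run terminates: a pick removes a delivery point and cannot enlarge the set of points
  that are still ahead, a jump passes at least one of the latter.\<close>
lemma greedy_run_exists:
  assumes "0 \<le> s" "U \<subseteq> greedy_init v R D"
  shows "\<exists>S. greedy_run v R D s U S"
  using assms
proof (induction "card U + card (pending s U)" arbitrary: s U rule: less_induct)
  case less
  have fin: "finite U" using less.prems(2) finite_greedy_init finite_subset by blast
  let ?F = "Fset v R D s U"
  consider (pick) "?F \<noteq> {}" | (jump) "?F = {}" "pending s U \<noteq> {}" | (stop) "?F = {}" "pending s U = {}"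
    by blast
  thus ?case
  proof cases
    case pick
    have finF: "finite ?F" using fin unfolding Fset_def by simp
    define i where "i = arg_min_on (\<lambda>j. ret v s (D ! j)) ?F"
    have iF: "i \<in> ?F" using arg_min_if_finite(1)[OF finF pick] by (simp add: i_def)
    have imin: "\<forall>j \<in> ?F. ret v s (D ! i) \<le> ret v s (D ! j)"
      unfolding i_def using arg_min_least[OF finF pick, of _ "\<lambda>j. ret v s (D ! j)"] by simp
    have iU: "i \<in> U" using iF unfolding Fset_def by simp
    have "s < ret v s (D ! i)"
      using start_less_finish[of "(i, s)"] valid_trip_if_Fset[OF iF less.prems(2,1)] less.prems(1)
      by (simp add: valid_trip_def)
    hence "pending (ret v s (D ! i)) (U - {i}) \<subseteq> pending s U" unfolding pending_def by auto
    hence "card (pending (ret v s (D ! i)) (U - {i})) \<le> card (pending s U)"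
      using fin by (intro card_mono) (auto simp: pending_def)
    moreover have "card (U - {i}) < card U" using fin iU by (rule card_Diff1_less)
    ultimately obtain S where "greedy_run v R D (ret v s (D ! i)) (U - {i}) S"
      using less.hyps[of "U - {i}" "ret v s (D ! i)"] less.prems \<open>s < ret v s (D ! i)\<close> by fastforce
    thus ?thesis using greedy_run.pick[OF iF imin] by blast
  next
    case jump
    have ahead: "\<exists>i \<in> U. es v R (D ! i) > s" using jump(2) unfolding pending_def by auto
    let ?s' = "Min {es v R (D ! i) | i. i \<in> U \<and> es v R (D ! i) > s}"
    have "card (pending ?s' U) < card (pending s U)"
      using pending_jump_target_psubset[OF less.prems(2) ahead] finite_pending[OF less.prems(2)]
      by (rule psubset_card_mono[rotated])
    then obtain S where "greedy_run v R D ?s' U S"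
      using less.hyps[of U ?s'] less.prems jump_target_gt[OF less.prems(2) ahead] by fastforce
    thus ?thesis using greedy_run.jump[OF jump(1) ahead] by blast
  next
    case stop
    hence "\<forall>i \<in> U. \<not> es v R (D ! i) > s" unfolding pending_def by auto
    thus ?thesis using greedy_run.stop[OF stop(1)] by blast
  qed
qed

lemma greedy_run_feasible_from:
  assumes "greedy_run v R D s U S" "0 \<le> s" "U \<subseteq> greedy_init v R D"
  shows "distinct (map fst S) \<and> fst ` set S \<subseteq> U \<and> (\<forall>x \<in> set S. valid_trip x) \<and>
         (S \<noteq> [] \<longrightarrow> s \<le> snd (hd S)) \<and> (\<forall>j. Suc j < length S \<longrightarrow> finish (S ! j) \<le> snd (S ! Suc j))"
  using assms
proof (induction rule: greedy_run.induct)
  case (pick i s U S)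
  have valid: "valid_trip (i, s)" using valid_trip_if_Fset[OF pick.hyps(1) pick.prems(2,1)] .
  hence "s < ret v s (D ! i)"
    using start_less_finish[of "(i, s)"] pick.prems(1) by (simp add: valid_trip_def)
  hence IH: "distinct (map fst S) \<and> fst ` set S \<subseteq> U - {i} \<and> (\<forall>x \<in> set S. valid_trip x) \<and>
      (S \<noteq> [] \<longrightarrow> ret v s (D ! i) \<le> snd (hd S)) \<and>
      (\<forall>j. Suc j < length S \<longrightarrow> finish (S ! j) \<le> snd (S ! Suc j))"
    using pick.IH pick.prems by auto
  have "finish (((i, s) # S) ! j) \<le> snd (((i, s) # S) ! Suc j)" if "Suc j < length ((i, s) # S)" for j
    using IH that by (cases j) (auto simp: hd_conv_nth)
  moreover have "i \<in> U" using pick.hyps(1) unfolding Fset_def by simp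
  ultimately show ?case using IH valid by auto
next
  case (jump s U S)
  thus ?case using jump_target_gt[OF jump.prems(2) jump.hyps(2)] by fastforce
qed simp

text \<open>Points already reachable at \<open>s\<close> were candidates for the greedy choice, and \<open>ret\<close> is
  monotone in the launch point; points not yet reachable at \<open>s\<close> can only be served by trips
  ending beyond \<open>s + R/v\<close>.\<close>
lemma greedy_choice_finish_le:
  assumes "i \<in> Fset v R D s U" "\<forall>k \<in> Fset v R D s U. ret v s (D ! i) \<le> ret v s (D ! k)"
    and "U \<subseteq> greedy_init v R D" "0 \<le> s"
    and "fst x \<in> U" "s \<le> snd x" "valid_trip x"
  shows "ret v s (D ! i) \<le> finish x"
proof -
  obtain j t where x: "x = (j, t)" by (cases x)
  have j: "j < length D" "valid_delivery v R t (D ! j)" using assms(7) x by (auto simp: valid_trip_def)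
  have "0 \<le> t" using assms(4,6) x by simp
  show ?thesis
  proof (cases "es v R (D ! j) \<le> s")
    case True
    hence "j \<in> Fset v R D s U"
      using assms(5,6) x valid_delivery_iff[OF \<open>0 \<le> t\<close> j(1)] j(2) unfolding Fset_def by auto
    hence "ret v s (D ! i) \<le> ret v s (D ! j)" using assms(2) by blast
    also have "\<dots> \<le> ret v t (D ! j)"
      using ret_mono[OF speed_gt_1 nth_D_ne_axis_point[OF assms(4) j(1)]
        nth_D_ne_axis_point[OF \<open>0 \<le> t\<close> j(1)]] assms(6) x by simp
    finally show ?thesis using x by simp
  next
    case False
    hence "\<not> in_ellipse v R s (D ! j)" using in_ellipse_iff_es_ls[OF speed_gt_1 range_pos] by simp
    hence "s + R / v < ret v t (D ! j)"
      using ret_gt_if_not_in_ellipse[OF speed_gt_1 range_pos nth_D_ne_axis_point[OF \<open>0 \<le> t\<close> j(1)]]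
        assms(6) x j(2) by simp
    moreover have "ret v s (D ! i) \<le> s + R / v"
      using finish_le_range[OF valid_trip_if_Fset[OF assms(1,3,4)]] by simp
    ultimately show ?thesis using x by simp
  qed
qed

lemma pending_if_Fset_empty:
  assumes "Fset v R D s U = {}" "0 \<le> s" "fst x \<in> U" "s \<le> snd x" "valid_trip x"
  shows "fst x \<in> pending s U"
proof -
  have "0 \<le> snd x" using assms(2,4) by simp
  hence "snd x \<le> ls v R (D ! fst x)" using assms(5) by (rule valid_trip_es_ls(2)[rotated])
  hence "fst x \<notin> Fset v R D s U \<Longrightarrow> s < es v R (D ! fst x)"
    using assms(3,4) unfolding Fset_def by auto
  thus ?thesis using assms(1,3) unfolding pending_def by simp
qed

definition unserved :: "real \<Rightarrow> nat set \<Rightarrow> nat set \<Rightarrow> (nat \<times> real) set \<Rightarrow> (nat \<times> real) set" where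
  "unserved s U G P = {x \<in> P. s \<le> snd x \<and> fst x \<in> U \<and> fst x \<notin> G}"

lemma card_unserved_le:
  assumes "greedy_run v R D s U S" "0 \<le> s" "U \<subseteq> greedy_init v R D"
    and "finite P" "\<forall>x \<in> P. valid_trip x" "disjoint_trips P"
  shows "card (unserved s U (fst ` set S) P) \<le> length S"
  using assms(1-3)
proof (induction rule: greedy_run.induct)
  case (pick i s U S)
  let ?b = "ret v s (D ! i)"
  have "s < ?b"
    using start_less_finish[of "(i, s)"] valid_trip_if_Fset[OF pick.hyps(1) pick.prems(2,1)]
      pick.prems(1) by (simp add: valid_trip_def)
  hence IH: "card (unserved ?b (U - {i}) (fst ` set S) P) \<le> length S"
    using pick.IH pick.prems by auto
  let ?A = "{x \<in> P. snd x < ?b \<and> ?b \<le> finish x}"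
  let ?B = "unserved ?b (U - {i}) (fst ` set S) P"
  have "unserved s U (fst ` set ((i, s) # S)) P \<subseteq> ?A \<union> ?B"
    using greedy_choice_finish_le[OF pick.hyps(1,2) pick.prems(2,1)] assms(5)
    unfolding unserved_def by fastforce
  moreover have "finite (?A \<union> ?B)" using assms(4) unfolding unserved_def by simp
  ultimately have "card (unserved s U (fst ` set ((i, s) # S)) P) \<le> card (?A \<union> ?B)"
    by (rule card_mono[rotated])
  also have "\<dots> \<le> card ?A + card ?B" by (rule card_Un_le)
  finally show ?case using card_trips_across_le_1[OF assms(4,6), of ?b] IH by simp
next
  case (jump s U S)
  let ?s' = "Min {es v R (D ! i) | i. i \<in> U \<and> es v R (D ! i) > s}"
  have "s < ?s'" using jump_target_gt[OF jump.prems(2) jump.hyps(2)] .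
  have "unserved s U (fst ` set S) P \<subseteq> unserved ?s' U (fst ` set S) P"
  proof
    fix x assume x: "x \<in> unserved s U (fst ` set S) P"
    hence "fst x \<in> pending s U"
      using pending_if_Fset_empty[OF jump.hyps(1) jump.prems(1)] assms(5) unfolding unserved_def by auto
    hence "?s' \<le> es v R (D ! fst x)" by (rule jump_target_le[OF jump.prems(2)])
    also have "\<dots> \<le> snd x"
      using x assms(5) jump.prems(1) unfolding unserved_def by (intro valid_trip_es_ls(1)) auto
    finally have "?s' \<le> snd x" .
    thus "x \<in> unserved ?s' U (fst ` set S) P" using x unfolding unserved_def by simp
  qed
  hence "card (unserved s U (fst ` set S) P) \<le> card (unserved ?s' U (fst ` set S) P)"
    using assms(4) unfolding unserved_def by (intro card_mono) auto
  thus ?case using jump.IH jump.prems \<open>s < ?s'\<close> by simp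
next
  case (stop s U)
  have "unserved s U {} P = {}"
    using pending_if_Fset_empty[OF stop.hyps(1) stop.prems(1)] stop.hyps(2) assms(5)
    unfolding unserved_def pending_def by fastforce
  thus ?case by simp
qed

lemma feasible_length_le_twice_greedy:
  assumes "greedy_schedule v R D Sg" "feasible v R D S"
  shows "length S \<le> 2 * length Sg"
proof -
  let ?G = "fst ` set Sg" and ?U = "greedy_init v R D"
  let ?served = "{x \<in> set S. fst x \<in> ?G}"
  have nonneg: "0 \<le> snd x" if "x \<in> set S" for x
    using feasible_start_nonneg[OF assms(2)] that by (metis in_set_conv_nth)
  have valid: "\<forall>x \<in> set S. valid_trip x" and inj: "inj_on fst (set S)"
    using assms(2) by (simp_all add: feasible_iff distinct_map)
  have "fst x \<in> ?U" if "x \<in> set S" for x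
    using valid that nonneg[OF that] valid_delivery_iff
    unfolding valid_trip_def greedy_init_def by auto
  hence "set S \<subseteq> ?served \<union> unserved 0 ?U ?G (set S)"
    using nonneg unfolding unserved_def by auto
  hence "card (set S) \<le> card (?served \<union> unserved 0 ?U ?G (set S))"
    by (rule card_mono[rotated]) (simp add: unserved_def)
  also have "\<dots> \<le> card ?served + card (unserved 0 ?U ?G (set S))" by (rule card_Un_le)
  also have "card ?served \<le> card ?G"
    using inj by (intro card_inj_on_le) (auto intro: inj_on_subset)
  also have "card ?G \<le> length Sg" using card_image_le[of "set Sg" fst] card_length[of Sg] by simp
  also have "card (unserved 0 ?U ?G (set S)) \<le> length Sg"
    using assms(1) valid feasible_disjoint_trips[OF assms(2)] unfolding greedy_schedule_def
    by (intro card_unserved_le) auto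
  finally have "card (set S) \<le> 2 * length Sg" by simp
  moreover have "distinct S" using assms(2) by (simp add: feasible_iff distinct_map)
  ultimately show ?thesis by (simp add: distinct_card)
qed

end

theorem theorem4p1:
  fixes v R :: real and D :: "(real \<times> real) list"
  assumes "v > 1" and "R > 0"
    and "\<forall>d \<in> set D. \<not> (snd d = 0 \<and> fst d \<ge> 0)"
  shows "(\<exists>Sg. greedy_schedule v R D Sg) \<and>
         (\<forall>Sg. greedy_schedule v R D Sg \<longrightarrow>
            feasible v R D Sg \<and>
            (\<forall>S. feasible v R D S \<longrightarrow> length S \<le> 2 * length Sg))"
proof -
  interpret truck_drone v R D using assms by unfold_locales
  have "\<exists>Sg. greedy_schedule v R D Sg"
    unfolding greedy_schedule_def using greedy_run_exists[of 0] by simp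
  moreover have "feasible v R D Sg" if "greedy_schedule v R D Sg" for Sg
    using greedy_run_feasible_from[of 0 "greedy_init v R D" Sg] that
    unfolding greedy_schedule_def feasible_iff by auto
  ultimately show ?thesis using feasible_length_le_twice_greedy by blast
qed

end
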